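(* Let $b\ge 2$. For every positive integer $N$ there exist infinitely many positive integers $M$ such that $N\cdot M$ is a $b$-wARH number. In particular every positive integer divides some $b$-wARH number.
   Context: Fix a base $b\ge 2$. $s_b(N)$ is the sum of the base-$b$ digits of $N$. For a positive integer $X$, its reversal $X^R$ is the integer whose base-$b$ representation is that of $X$ written in reverse order (leading zeros of the result are dropped). A positive integer $N$ is a $b$-wARH number if there exists an integer $A\ge 0$ such that $N=(A+s_b(N))+(A+s_b(N))^R$. *)

theory Defs
  imports Main
begin

fun digits :: "nat \<Rightarrow> nat \<Rightarrow> nat list" where
  "digits b n = (if b < 2 \<or> n = 0 then [] else n mod b # digits b (n div b))"

declare digits.simps[simp del]

fun from_digits :: "nat \<Rightarrow> nat list \<Rightarrow> nat" where
  "from_digits b [] = 0"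
| "from_digits b (d # ds) = d + b * from_digits b ds"

definition digit_sum :: "nat \<Rightarrow> nat \<Rightarrow> nat" where
  "digit_sum b n = sum_list (digits b n)"

text \<open>Reversal: read the base-b representation backwards (leading zeros dropped
  automatically by evaluation).\<close>
definition rev_num :: "nat \<Rightarrow> nat \<Rightarrow> nat" where
  "rev_num b n = from_digits b (rev (digits b n))"

definition wARH :: "nat \<Rightarrow> nat \<Rightarrow> bool" where
  "wARH b N \<longleftrightarrow> N > 0 \<and>
     (\<exists>A::nat. N = (A + digit_sum b N) + rev_num b (A + digit_sum b N))"

end

theory Submission
  imports Defs "HOL-Library.Infinite_Set"
begin

text \<open>If \<open>X \<ge> b^2\<close> has \<open>k\<close> digits, then \<open>X + X^R\<close> has at most \<open>k + 1\<close> digits, so its digit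
  sum is at most \<open>(b - 1)(k + 1) \<le> b^(k - 1) \<le> X\<close>; hence \<open>X + X^R\<close> is b-wARH with
  \<open>A = X - s_b(X + X^R)\<close>. It remains to find arbitrarily large such \<open>X\<close> with \<open>N\<close> dividing
  \<open>X + X^R\<close>. Concatenating \<open>N\<close> copies of a suitable digit block of length \<open>2h\<close> gives
  \<open>X + X^R = (b + 1) \<Sum>i<N. b^(2h - 1 + 2hi)\<close>. Powers of \<open>b\<close> are eventually periodic modulo \<open>N\<close>,
  so when \<open>2h\<close> is a large multiple of the period all \<open>N\<close> summands are congruent and the sum is
  divisible by \<open>N\<close>.\<close>

lemma from_digits_append:
  "from_digits b (xs @ ys) = from_digits b xs + b ^ length xs * from_digits b ys"
  by (induction xs) (auto simp: algebra_simps)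

lemma from_digits_replicate_0 [simp]: "from_digits b (replicate n 0) = 0"
  by (induction n) auto

lemma from_digits_replicate_max:
  assumes "b > 0" shows "from_digits b (replicate h (b - 1)) + 1 = b ^ h"
proof (induction h)
  case (Suc h)
  have "from_digits b (replicate (Suc h) (b - 1)) + 1 = b * (from_digits b (replicate h (b - 1)) + 1)"
    using assms by (simp add: algebra_simps)
  with Suc show ?case by simp
qed simp

lemma from_digits_concat_replicate:
  "from_digits b (concat (replicate n ds)) = from_digits b ds * (\<Sum>i<n. b ^ (i * length ds))"
proof (induction n)
  case (Suc n)
  have "(\<Sum>i<Suc n. b ^ (i * length ds)) = 1 + b ^ length ds * (\<Sum>i<n. b ^ (i * length ds))"
    by (subst sum.lessThan_Suc_shift) (simp add: sum_distrib_left power_add del: sum.lessThan_Suc)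
  with Suc show ?case by (simp add: from_digits_append algebra_simps)
qed simp

lemma from_digits_less_power:
  assumes "\<forall>d\<in>set ds. d < b" shows "from_digits b ds < b ^ length ds"
  using assms
proof (induction ds)
  case (Cons d ds)
  then have "b * (from_digits b ds + 1) \<le> b * b ^ length ds"
    by (intro mult_left_mono) simp_all
  with Cons.prems show ?case by (simp add: algebra_simps)
qed simp

lemma power_le_from_digits:
  assumes "b > 0" "ds \<noteq> []" "last ds \<noteq> 0" shows "b ^ (length ds - 1) \<le> from_digits b ds"
  using assms(2,3)
proof (induction ds)
  case (Cons d ds)
  show ?case
  proof (cases ds)
    case (Cons d' ds')
    with Cons.IH Cons.prems have "b ^ (length ds - 1) \<le> from_digits b ds" by simp
    then have "b * b ^ (length ds - 1) \<le> d + b * from_digits b ds"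
      using le_add2 mult_le_mono2 order_trans by blast
    with \<open>ds = d' # ds'\<close> show ?thesis by simp
  qed (use Cons.prems in simp)
qed simp

lemma digits_from_digits:
  assumes "b \<ge> 2" "\<forall>d\<in>set ds. d < b" "ds = [] \<or> last ds \<noteq> 0"
  shows "digits b (from_digits b ds) = ds"
  using assms(2,3)
proof (induction ds)
  case Nil then show ?case by (simp add: digits.simps)
next
  case (Cons d ds)
  have "from_digits b (d # ds) \<noteq> 0"
  proof (cases "ds = []")
    case False
    then have "0 < b ^ (length ds - 1)" "b ^ (length ds - 1) \<le> from_digits b ds"
      using assms(1) Cons.prems power_le_from_digits[of b ds] by simp_all
    then have "from_digits b ds > 0" by linarith
    with assms(1) show ?thesis by simp
  qed (use Cons.prems in simp)
  moreover have "digits b (from_digits b ds) = ds" using Cons by (cases ds) auto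
  ultimately show ?case using Cons.prems assms(1) by (subst digits.simps) simp
qed

lemma digits_less_base: "d \<in> set (digits b n) \<Longrightarrow> d < b"
  by (induction b n rule: digits.induct) (subst (asm) digits.simps, auto split: if_splits)

lemma from_digits_digits: "b \<ge> 2 \<Longrightarrow> from_digits b (digits b n) = n"
  by (induction b n rule: digits.induct) (subst digits.simps, simp)

lemma last_digits_nonzero: "digits b n \<noteq> [] \<Longrightarrow> last (digits b n) \<noteq> 0"
proof (induction b n rule: digits.induct)
  case (1 b n)
  then show ?case
    by (subst (asm) (1 2) digits.simps) (auto simp: digits.simps div_eq_0_iff split: if_splits)
qed

lemma less_power_length_digits: "b \<ge> 2 \<Longrightarrow> n < b ^ length (digits b n)"
  using from_digits_less_power[of "digits b n" b] digits_less_base from_digits_digits by metis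

lemma power_length_digits_le:
  assumes "b \<ge> 2" "n > 0" shows "b ^ (length (digits b n) - 1) \<le> n"
proof -
  have "digits b n \<noteq> []" using assms by (subst digits.simps) simp
  then show ?thesis
    using power_le_from_digits[of b "digits b n"] last_digits_nonzero from_digits_digits assms
    by simp
qed

lemma length_digits_le:
  assumes "b \<ge> 2" "n < b ^ k" shows "length (digits b n) \<le> k"
proof (cases "n = 0")
  case True then show ?thesis by (simp add: digits.simps)
next
  case False
  with assms have "b ^ (length (digits b n) - 1) < b ^ k"
    using power_length_digits_le[of b n] by linarith
  then have "length (digits b n) - 1 < k" using assms(1) power_less_imp_less_exp by simp
  then show ?thesis by simp
qed

lemma digit_sum_le_length: "digit_sum b n \<le> (b - 1) * length (digits b n)"
proof -
  have "digit_sum b n \<le> (\<Sum>d\<leftarrow>digits b n. b - 1)"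
    unfolding digit_sum_def using sum_list_mono[of "digits b n" id "\<lambda>_. b - 1"] digits_less_base
    by fastforce
  then show ?thesis by (simp add: sum_list_triv mult.commute)
qed

lemma rev_num_less_power: "rev_num b n < b ^ length (digits b n)"
  unfolding rev_num_def using from_digits_less_power[of "rev (digits b n)" b] digits_less_base
  by simp

lemma linear_le_power:
  assumes "b \<ge> 2" "k \<ge> 3" shows "(b - 1) * (k + 1) \<le> b ^ (k - 1)"
  using assms(2)
proof (induction k rule: dec_induct)
  case base
  obtain c where "b = c + 2" using assms(1) le_Suc_ex by (metis add.commute)
  moreover have "(c + 1) * 4 \<le> (c + 2) * (c + 2)" by (simp add: algebra_simps)
  ultimately show ?case by (simp add: numeral_eq_Suc)
next
  case (step k)
  have "(b - 1) * (Suc k + 1) \<le> 2 * ((b - 1) * (k + 1))" by simp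
  also have "\<dots> \<le> b * b ^ (k - 1)" using step assms(1) by (intro mult_mono) simp_all
  also have "\<dots> = b ^ (Suc k - 1)" using step by (cases k) auto
  finally show ?case .
qed

lemma digit_sum_add_rev_num_le:
  assumes "b \<ge> 2" "b ^ 2 \<le> n" shows "digit_sum b (n + rev_num b n) \<le> n"
proof -
  have "n > 0" using assms order_less_le_trans[of 0 "b ^ 2" n] by simp
  define k where "k = length (digits b n)"
  have "b ^ 2 < b ^ k" using assms less_power_length_digits[of b n] unfolding k_def by linarith
  then have "k \<ge> 3" using assms(1) power_less_imp_less_exp[of b 2 k] by simp
  have "n + rev_num b n < b * b ^ k"
    using less_power_length_digits[of b n] rev_num_less_power[of b n] assms(1)
    unfolding k_def by (metis add_less_mono mult_2 mult_le_mono1 order_less_le_trans)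
  then have "length (digits b (n + rev_num b n)) \<le> k + 1"
    using length_digits_le assms(1) by simp
  then have "digit_sum b (n + rev_num b n) \<le> (b - 1) * (k + 1)"
    using digit_sum_le_length le_trans mult_le_mono2 by blast
  also have "\<dots> \<le> b ^ (k - 1)" using linear_le_power assms(1) \<open>k \<ge> 3\<close> .
  also have "\<dots> \<le> n"
    using power_length_digits_le[of b n] assms \<open>n > 0\<close> by (simp add: k_def)
  finally show ?thesis .
qed

lemma wARH_add_rev_num:
  assumes "b \<ge> 2" "b ^ 2 \<le> n" shows "wARH b (n + rev_num b n)"
proof -
  define A where "A = n - digit_sum b (n + rev_num b n)"
  have "A + digit_sum b (n + rev_num b n) = n"
    using digit_sum_add_rev_num_le[OF assms] by (simp add: A_def)
  moreover have "n > 0" using assms order_less_le_trans[of 0 "b ^ 2" n] by simp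
  ultimately show ?thesis unfolding wARH_def by (metis add_gr_0)
qed

text \<open>Written most significant digit first, \<open>block b h\<close> is \<open>1 0\<dots>0 (b-1)\<dots>(b-1)\<close>
  with \<open>h - 1\<close> zeros and \<open>h\<close> maximal digits; adding its reversal carries all the way
  through and leaves the two-digit number \<open>(b + 1) * b ^ (2 * h - 1)\<close>.\<close>

definition block :: "nat \<Rightarrow> nat \<Rightarrow> nat list" where
  "block b h = replicate h (b - 1) @ replicate (h - 1) 0 @ [1]"

definition block_number :: "nat \<Rightarrow> nat \<Rightarrow> nat \<Rightarrow> nat" where
  "block_number b h n = from_digits b (concat (replicate n (block b h)))"

lemma from_digits_block_add_rev:
  assumes "b > 0" "h > 0"
  shows "from_digits b (block b h) + from_digits b (rev (block b h)) = (b + 1) * b ^ (2 * h - 1)"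
proof -
  define F where "F = from_digits b (replicate h (b - 1))"
  have F: "F + 1 = b ^ h" using from_digits_replicate_max[OF assms(1)] by (simp add: F_def)
  have h: "b ^ h = b * b ^ (h - 1)" "b ^ (2 * h - 1) = b ^ h * b ^ (h - 1)"
    using assms(2) by (simp_all flip: power_Suc power_add mult_2)
  have "from_digits b (block b h) = F + b ^ (2 * h - 1)"
    using h(2) by (simp add: block_def from_digits_append F_def)
  moreover have "from_digits b (rev (block b h)) = 1 + b ^ h * F"
    by (simp add: block_def from_digits_append F_def h(1) mult.assoc)
  moreover have "F + 1 + b ^ h * F = b ^ h * b ^ h"
    by (metis F add.commute add_mult_distrib2 mult.right_neutral)
  moreover have "b ^ h * b ^ h = b * b ^ (2 * h - 1)" by (metis h mult.assoc mult.commute)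
  ultimately show ?thesis by (simp add: algebra_simps)
qed

lemma last_concat_replicate: "ds \<noteq> [] \<Longrightarrow> n > 0 \<Longrightarrow> last (concat (replicate n ds)) = last ds"
  by (induction n) (auto simp: last_append)

lemma digits_block_number:
  assumes "b \<ge> 2"
  shows "digits b (block_number b h n) = concat (replicate n (block b h))"
proof -
  have "\<forall>d\<in>set (concat (replicate n (block b h))). d < b" using assms by (auto simp: block_def)
  moreover have "last (concat (replicate n (block b h))) = 1" if "n > 0"
    using that by (simp add: last_concat_replicate block_def)
  ultimately show ?thesis
    unfolding block_number_def using digits_from_digits[OF assms] by (cases "n = 0") (auto simp: digits.simps)
qed

lemma block_number_add_rev_num:
  assumes "b \<ge> 2" "h > 0"
  shows "block_number b h n + rev_num b (block_number b h n)
    = (b + 1) * b ^ (2 * h - 1) * (\<Sum>i<n. b ^ (i * (2 * h)))"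
proof -
  have "rev_num b (block_number b h n) = from_digits b (concat (replicate n (rev (block b h))))"
    by (simp add: rev_num_def digits_block_number[OF assms(1)] rev_concat)
  moreover have "length (block b h) = 2 * h" using assms(2) by (simp add: block_def)
  ultimately show ?thesis
    using from_digits_block_add_rev[of b h] assms
    by (simp add: block_number_def from_digits_concat_replicate flip: add_mult_distrib)
qed

lemma power_le_block_number:
  assumes "b > 0" "h > 0" "n > 0" shows "b ^ (2 * h * n - 1) \<le> block_number b h n"
proof -
  have "length (concat (replicate n (block b h))) = 2 * h * n"
    using assms(2) by (simp add: block_def length_concat sum_list_replicate)
  then show ?thesis
    using power_le_from_digits[OF assms(1), of "concat (replicate n (block b h))"] assms(2,3)
    by (simp add: block_number_def last_concat_replicate block_def)
qed

lemma power_mod_eventually_periodic: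
  fixes b N :: nat
  assumes "N > 0"
  obtains u p where "p > 0" "\<And>x j. x \<ge> u \<Longrightarrow> b ^ (x + p * j) mod N = b ^ x mod N"
proof -
  have "finite (range (\<lambda>x. b ^ x mod N))"
    using assms by (auto intro: finite_subset[of _ "{..<N}"])
  then obtain u where "infinite {x. b ^ x mod N = b ^ u mod N}"
    using pigeonhole_infinite[of "UNIV :: nat set"] by auto
  then obtain v where "v > u" and v: "b ^ v mod N = b ^ u mod N"
    unfolding infinite_nat_iff_unbounded by blast
  define p where "p = v - u"
  have step: "b ^ (x + p) mod N = b ^ x mod N" if "x \<ge> u" for x
  proof -
    have "b ^ (x + p) = b ^ (x - u) * b ^ v" and "b ^ x = b ^ (x - u) * b ^ u"
      using that \<open>v > u\<close> by (simp_all add: p_def flip: power_add)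
    then show ?thesis using v by (metis mod_mult_right_eq)
  qed
  have "b ^ (x + p * j) mod N = b ^ x mod N" if "x \<ge> u" for x j
  proof (induction j)
    case (Suc j)
    have "b ^ (x + p * Suc j) = b ^ ((x + p * j) + p)" by (simp add: algebra_simps)
    with Suc step[of "x + p * j"] that show ?case by simp
  qed simp
  moreover have "p > 0" using \<open>v > u\<close> by (simp add: p_def)
  ultimately show ?thesis using that by blast
qed

lemma dvd_sum_of_congruent:
  fixes f :: "nat \<Rightarrow> nat"
  assumes "\<And>i. i < N \<Longrightarrow> f i mod N = c mod N"
  shows "N dvd (\<Sum>i<N. f i)"
proof -
  have "(\<Sum>i<N. f i) mod N = (\<Sum>i<N. f i mod N) mod N" by (simp add: mod_sum_eq)
  also have "\<dots> = (N * (c mod N)) mod N" using assms by simp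
  finally show ?thesis by (simp add: dvd_eq_mod_eq_0)
qed

lemma dvd_block_number_add_rev_num:
  assumes "b \<ge> 2" "h > 0" "p dvd 2 * h"
    and periodic: "\<And>j. b ^ (2 * h - 1 + p * j) mod N = b ^ (2 * h - 1) mod N"
  shows "N dvd block_number b h N + rev_num b (block_number b h N)"
proof -
  obtain q where q: "2 * h = p * q" using assms(3) by blast
  have "N dvd (\<Sum>i<N. b ^ (2 * h - 1) * b ^ (i * (2 * h)))"
  proof (rule dvd_sum_of_congruent)
    fix i
    have "i * (2 * h) = p * (q * i)" using q by simp
    then have "b ^ (2 * h - 1) * b ^ (i * (2 * h)) = b ^ (2 * h - 1 + p * (q * i))"
      by (simp only: power_add)
    then show "b ^ (2 * h - 1) * b ^ (i * (2 * h)) mod N = b ^ (2 * h - 1) mod N"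
      using periodic by simp
  qed
  moreover have "block_number b h N + rev_num b (block_number b h N)
    = (b + 1) * (\<Sum>i<N. b ^ (2 * h - 1) * b ^ (i * (2 * h)))"
    using block_number_add_rev_num[OF assms(1,2)] by (simp only: mult.assoc flip: sum_distrib_left)
  ultimately show ?thesis by simp
qed

lemma wARH_multiple_above:
  assumes "b \<ge> 2" "N > 0"
  obtains M where "M > B" "wARH b (N * M)"
proof -
  obtain u p where "p > 0" and per: "\<And>x j. x \<ge> u \<Longrightarrow> b ^ (x + p * j) mod N = b ^ x mod N"
    using power_mod_eventually_periodic[OF assms(2)] by metis
  define c where "c = u + N * B + 2"
  define h where "h = p * c"
  define X where "X = block_number b h N"
  have "2 \<le> c" "u < c" "N * B < c" by (simp_all add: c_def)
  moreover have "c \<le> h" using \<open>p > 0\<close> by (simp add: h_def)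
  moreover have "h \<le> h * N" using assms(2) by simp
  ultimately have "h \<ge> 2" "u \<le> 2 * h - 1" "N * B \<le> 2 * h * N - 1" "2 \<le> 2 * h * N - 1"
    by linarith+
  have X: "b ^ (2 * h * N - 1) \<le> X"
    using power_le_block_number[of b h N] assms \<open>h \<ge> 2\<close> by (simp add: X_def)
  have "b ^ 2 \<le> b ^ (2 * h * N - 1)"
    using \<open>2 \<le> 2 * h * N - 1\<close> assms(1) by (simp add: power_increasing)
  then have "b ^ 2 \<le> X" using X by (rule order_trans)
  have "2 * h * N - 1 < b ^ (2 * h * N - 1)" using assms(1) by (simp add: power_gt_expt)
  with X \<open>N * B \<le> 2 * h * N - 1\<close> have "N * B < X" by linarith
  have "p dvd 2 * h" by (simp add: h_def)
  then have "N dvd X + rev_num b X"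
    unfolding X_def using dvd_block_number_add_rev_num assms(1) \<open>h \<ge> 2\<close> per[OF \<open>u \<le> 2 * h - 1\<close>]
    by simp
  then obtain M where M: "X + rev_num b X = N * M" by blast
  have "N * B < N * M" using \<open>N * B < X\<close> M by linarith
  then have "M > B" by simp
  moreover have "wARH b (N * M)" using wARH_add_rev_num[OF assms(1) \<open>b ^ 2 \<le> X\<close>] M by simp
  ultimately show ?thesis using that by blast
qed

theorem corollary6:
  fixes b :: nat
  assumes "b \<ge> 2"
  shows "\<forall>N::nat. N > 0 \<longrightarrow> infinite {M::nat. M > 0 \<and> wARH b (N * M)}"
proof (intro allI impI)
  fix N :: nat
  assume "N > 0"
  show "infinite {M. M > 0 \<and> wARH b (N * M)}"
    unfolding infinite_nat_iff_unbounded
  proof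
    fix B
    obtain M where "M > B" "wARH b (N * M)" using wARH_multiple_above[OF assms \<open>N > 0\<close>] .
    then show "\<exists>M>B. M \<in> {M. M > 0 \<and> wARH b (N * M)}" by auto
  qed
qed

end
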